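(* Let $C$ be an $[n,k]$ code over $\mathbb{F}_q$ with $k\ge 2$. (a) If $C$ is a dual Hamming code, then $d(C^\perp)=3$ and $\gamma(C)=k=k-d(C^\perp)+3$. (b) If $C$ is an MDS code (i.e. its minimum Hamming weight equals $n-k+1$) having no codeword of weight $n$, then $d(C^\perp)=k+1$ and $\gamma(C)=2=k-d(C^\perp)+3$.
   Context: An $[n,k]$ code over $\mathbb{F}_q$ is a $k$-dimensional subspace $C\subseteq\mathbb{F}_q^n$; write $E=\{1,\dots,n\}$. For $\bm{x}\in\mathbb{F}_q^n$, $\mathrm{supp}(\bm{x})=\{i: x_i\neq 0\}$ and the weight is $|\mathrm{supp}(\bm{x})|$; for $B\subseteq\mathbb{F}_q^n$, $\mathrm{Supp}(B)=\bigcup_{\bm{x}\in B}\mathrm{supp}(\bm{x})$. $C^\perp$ is the dual code with respect to the standard inner product and $d(C^\perp)$ is the minimum weight of a nonzero codeword of $C^\perp$. The covering dimension is $\gamma(C)=\infty$ if $\mathrm{Supp}(C)\neq E$, and otherwise $\gamma(C)$ is the least positive integer $r$ such that $C$ has an $r$-dimensional subspace $D$ with $\mathrm{Supp}(D)=E$. A dual Hamming code is an $[(q^k-1)/(q-1),k]$ code over $\mathbb{F}_q$ with a generator matrix whose columns consist of exactly one nonzero vector from each one-dimensional subspace of $\mathbb{F}_q^k$. *)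

theory Defs
  imports "HOL-Analysis.Analysis" "HOL-Library.Extended_Nat"
begin

text \<open>Codes of length n = CARD('n) over a finite field 'a: subspaces of 'a^'n.
  Coordinates E = UNIV :: 'n set.\<close>

definition supp :: "'a::zero ^ 'n \<Rightarrow> 'n set" where
  "supp x = {i. x $ i \<noteq> 0}"

definition wt :: "'a::zero ^ 'n::finite \<Rightarrow> nat" where
  "wt x = card (supp x)"

definition Supp :: "('a::zero ^ 'n) set \<Rightarrow> 'n set" where
  "Supp B = (\<Union>x\<in>B. supp x)"

definition is_code :: "('a::{finite,field} ^ 'n::finite) set \<Rightarrow> bool" where
  "is_code C \<longleftrightarrow> vec.subspace C"

definition dotp :: "'a::comm_ring ^ 'n::finite \<Rightarrow> 'a ^ 'n \<Rightarrow> 'a" where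
  "dotp x y = (\<Sum>i\<in>UNIV. x $ i * y $ i)"

definition dual_code :: "('a::{finite,field} ^ 'n::finite) set \<Rightarrow> ('a ^ 'n) set" where
  "dual_code C = {y. \<forall>x\<in>C. dotp x y = 0}"

definition min_dist :: "('a::{finite,field} ^ 'n::finite) set \<Rightarrow> nat" where
  "min_dist C = (LEAST w. \<exists>x\<in>C. x \<noteq> 0 \<and> wt x = w)"

definition covering_dim :: "('a::{finite,field} ^ 'n::finite) set \<Rightarrow> enat" where
  "covering_dim C =
     (if Supp C \<noteq> UNIV then \<infinity>
      else enat (LEAST r. 0 < r \<and>
             (\<exists>D. vec.subspace D \<and> D \<subseteq> C \<and> vec.dim D = r \<and> Supp D = UNIV)))"

text \<open>Dual Hamming code: an [(q^k-1)/(q-1), k] code with a k x n generator matrix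
  (rows G 0, ..., G (k-1), a basis of C) whose columns consist of exactly one nonzero
  vector from each one-dimensional subspace of F_q^k. Vectors of F_q^k are represented
  as functions v :: nat => 'a vanishing outside {0..<k}; column j of G is
  (\<lambda>i. G i $ j) restricted to i < k.\<close>
definition dual_hamming :: "('a::{finite,field} ^ 'n::finite) set \<Rightarrow> bool" where
  "dual_hamming C \<longleftrightarrow> vec.subspace C \<and>
     (let k = vec.dim C in
       CARD('n) = (CARD('a) ^ k - 1) div (CARD('a) - 1) \<and>
       (\<exists>G :: nat \<Rightarrow> 'a ^ 'n.
          inj_on G {..<k} \<and> vec.independent (G ` {..<k}) \<and> vec.span (G ` {..<k}) = C \<and>
          (\<forall>j. \<exists>i<k. G i $ j \<noteq> 0) \<and>
          (\<forall>v :: nat \<Rightarrow> 'a. (\<forall>i\<ge>k. v i = 0) \<and> v \<noteq> (\<lambda>_. 0) \<longrightarrow>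
              (\<exists>!j. \<exists>c. \<forall>i<k. G i $ j = c * v i))))"

definition is_MDS :: "('a::{finite,field} ^ 'n::finite) set \<Rightarrow> bool" where
  "is_MDS C \<longleftrightarrow> vec.subspace C \<and> min_dist C = CARD('n) - vec.dim C + 1"

end

theory Submission
  imports Defs
begin

text \<open>(a) The columns of a generator matrix of a dual Hamming code represent every point of the
  projective space over F_q^k once. A dual codeword of weight at most 2 would make a column zero
  or two columns proportional; the columns proportional to e_0, e_1 and e_0 + e_1 give one of
  weight 3. A subspace of dimension r < k of C misses a coordinate: the r coefficient vectors
  of its basis have a common nonzero orthogonal vector (fewer equations than unknowns), and the
  column proportional to it vanishes on the subspace.

  (b) A nonzero codeword of an MDS code vanishes on fewer than k coordinates, so the codewords
  take every prescribed pattern on any k coordinates. Hence a dual codeword has weight at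
  least k + 1, while any k + 1 coordinates support a nonzero dual codeword. A 1-dimensional
  covering subspace would contain a codeword of full weight, and two codewords with suitable
  patterns on k coordinates cover everything.\<close>

lemma two_le_card_field: "2 \<le> CARD('a::{finite,field})"
proof -
  have "card {0::'a, 1} \<le> CARD('a)" by (rule card_mono) auto
  then show ?thesis by simp
qed

lemma card_span_independent:
  fixes B :: "('a::{finite,field} ^ 'n::finite) set"
  assumes ind: "vec.independent B"
  shows "card (vec.span B) = CARD('a) ^ card B"
proof -
  have fB: "finite B" using ind vec.independent_bound_general by blast
  define f where "f u = (\<Sum>v\<in>B. u v *s v)" for u :: "'a ^ 'n \<Rightarrow> 'a"
  let ?P = "PiE B (\<lambda>_. UNIV :: 'a set)"
  have img: "f ` ?P = vec.span B"
  proof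
    show "f ` ?P \<subseteq> vec.span B" unfolding vec.span_finite[OF fB] f_def by auto
    show "vec.span B \<subseteq> f ` ?P"
    proof
      fix x assume "x \<in> vec.span B"
      then obtain u where x: "x = (\<Sum>v\<in>B. u v *s v)" unfolding vec.span_finite[OF fB] by auto
      have "f (restrict u B) = x" unfolding f_def x by (rule sum.cong) auto
      moreover have "restrict u B \<in> ?P" by auto
      ultimately show "x \<in> f ` ?P" by blast
    qed
  qed
  have inj: "inj_on f ?P"
  proof
    fix u w assume u: "u \<in> ?P" and w: "w \<in> ?P" and "f u = f w"
    then have "(\<Sum>v\<in>B. (u v - w v) *s v) = 0"
      by (simp add: f_def vec.scale_left_diff_distrib sum_subtractf)
    then have "\<forall>v\<in>B. u v - w v = 0"
      using ind unfolding vec.independent_explicit by (auto dest!: spec[of _ "\<lambda>v. u v - w v"])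
    then show "u = w" using u w by (intro PiE_ext) auto
  qed
  have "card (vec.span B) = card ?P" using card_image[OF inj] img by simp
  then show ?thesis using fB by (simp add: card_PiE)
qed

lemma card_subspace:
  fixes C :: "('a::{finite,field} ^ 'n::finite) set"
  assumes "vec.subspace C"
  shows "card C = CARD('a) ^ vec.dim C"
proof -
  obtain B where B: "B \<subseteq> C" "vec.independent B" "C \<subseteq> vec.span B" "card B = vec.dim C"
    using vec.basis_exists by blast
  have "vec.span B = C" using vec.span_subspace[OF B(1,3) assms] .
  then show ?thesis using card_span_independent[OF B(2)] B(4) by simp
qed

text \<open>By counting, the map sending an assignment of the unknowns to the values of the equations
  is not injective; the difference of two colliding assignments solves the system.\<close>
lemma homogeneous_system_nontrivial_solution:
  fixes a :: "'b \<Rightarrow> 'i \<Rightarrow> 'a::{finite,field}"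
  assumes I: "finite I" and B: "finite B" and less: "card B < card I"
  obtains w where "\<forall>i. i \<notin> I \<longrightarrow> w i = 0" and "\<exists>i\<in>I. w i \<noteq> 0"
    and "\<forall>b\<in>B. (\<Sum>i\<in>I. a b i * w i) = 0"
proof -
  define \<Phi> where "\<Phi> w = restrict (\<lambda>b. \<Sum>i\<in>I. a b i * w i) B" for w :: "'i \<Rightarrow> 'a"
  let ?PI = "PiE I (\<lambda>_. UNIV :: 'a set)" and ?PB = "PiE B (\<lambda>_. UNIV :: 'a set)"
  have "CARD('a) ^ card B < CARD('a) ^ card I"
    using less two_le_card_field[where 'a='a] by (intro power_strict_increasing) auto
  then have card_less: "card ?PB < card ?PI" using I B by (simp add: card_PiE)
  have "\<not> inj_on \<Phi> ?PI"
  proof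
    assume "inj_on \<Phi> ?PI"
    moreover have "\<Phi> ` ?PI \<subseteq> ?PB" unfolding \<Phi>_def by auto
    moreover have "finite ?PB" using B by (rule finite_PiE) simp
    ultimately have "card ?PI \<le> card ?PB" by (rule card_inj_on_le)
    then show False using card_less by simp
  qed
  then obtain w1 w2 where w: "w1 \<in> ?PI" "w2 \<in> ?PI" "\<Phi> w1 = \<Phi> w2" "w1 \<noteq> w2"
    unfolding inj_on_def by blast
  show thesis
  proof (rule that[of "\<lambda>i. w1 i - w2 i"])
    show "\<forall>i. i \<notin> I \<longrightarrow> w1 i - w2 i = 0" using PiE_arb[OF w(1)] PiE_arb[OF w(2)] by simp
    show "\<exists>i\<in>I. w1 i - w2 i \<noteq> 0"
    proof (rule ccontr)
      assume "\<not> (\<exists>i\<in>I. w1 i - w2 i \<noteq> 0)"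
      then have "w1 = w2" using w(1,2) by (intro PiE_ext) auto
      then show False using w(4) by simp
    qed
    show "\<forall>b\<in>B. (\<Sum>i\<in>I. a b i * (w1 i - w2 i)) = 0"
    proof
      fix b assume "b \<in> B"
      then have "(\<Sum>i\<in>I. a b i * w1 i) = (\<Sum>i\<in>I. a b i * w2 i)"
        using fun_cong[OF w(3), of b] by (simp add: \<Phi>_def)
      then show "(\<Sum>i\<in>I. a b i * (w1 i - w2 i)) = 0" by (simp add: right_diff_distrib sum_subtractf)
    qed
  qed
qed

lemma Supp_mono: "A \<subseteq> B \<Longrightarrow> Supp A \<subseteq> Supp B"
  unfolding Supp_def by auto

lemma subspace_supp_subset: "vec.subspace {x :: 'a::field ^ 'n::finite. supp x \<subseteq> A}"
  unfolding vec.subspace_def supp_def by (auto simp: subset_iff) (metis add.right_neutral)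

lemma Supp_span:
  fixes S :: "('a::field ^ 'n::finite) set"
  shows "Supp (vec.span S) = Supp S"
proof
  have "vec.span S \<subseteq> {x. supp x \<subseteq> Supp S}"
    by (rule vec.span_minimal[OF _ subspace_supp_subset]) (auto simp: Supp_def)
  then show "Supp (vec.span S) \<subseteq> Supp S" unfolding Supp_def by auto
  show "Supp S \<subseteq> Supp (vec.span S)" by (rule Supp_mono[OF vec.span_superset])
qed

lemma subspace_dim_one_Supp:
  assumes "vec.subspace D" and "vec.dim D = 1"
  obtains v where "v \<in> D" and "Supp D = supp v"
proof -
  obtain B where B: "B \<subseteq> D" "vec.independent B" "D \<subseteq> vec.span B" "card B = 1"
    using vec.basis_exists[of D] unfolding assms(2) by blast
  then obtain v where "B = {v}" by (metis card_1_singletonE)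
  moreover have "vec.span B = D" using vec.span_subspace[OF B(1,3) assms(1)] .
  ultimately show thesis using that B(1) Supp_span[of B] by (simp add: Supp_def)
qed

lemma dotp_supp_subset:
  assumes "supp y \<subseteq> S"
  shows "dotp x y = (\<Sum>i\<in>S. x $ i * y $ i)"
  unfolding dotp_def using assms
  by (intro sum.mono_neutral_right) (auto simp: supp_def subset_iff, metis mult_zero_right)

lemma dual_code_span: "y \<in> dual_code (vec.span S) \<longleftrightarrow> (\<forall>x\<in>S. dotp x y = 0)"
proof
  assume "\<forall>x\<in>S. dotp x y = 0"
  moreover have "vec.subspace {x. dotp x y = 0}"
    unfolding vec.subspace_def dotp_def
    by (simp add: distrib_right sum.distrib mult.assoc flip: sum_distrib_left)
  ultimately have "vec.span S \<subseteq> {x. dotp x y = 0}" by (intro vec.span_minimal) auto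
  then show "y \<in> dual_code (vec.span S)" unfolding dual_code_def by auto
qed (auto simp: dual_code_def vec.span_base)

lemma min_dist_le: "x \<in> C \<Longrightarrow> x \<noteq> 0 \<Longrightarrow> min_dist C \<le> wt x"
  unfolding min_dist_def by (rule Least_le) auto

lemma min_dist_eqI:
  assumes "x \<in> C" "x \<noteq> 0" "wt x \<le> d" and "\<And>y. y \<in> C \<Longrightarrow> y \<noteq> 0 \<Longrightarrow> d \<le> wt y"
  shows "min_dist C = d"
  unfolding min_dist_def
proof (rule Least_equality)
  show "\<exists>y\<in>C. y \<noteq> 0 \<and> wt y = d" using assms(1-3) assms(4)[OF assms(1,2)] by force
qed (use assms(4) in blast)

lemma covering_dim_eqI:
  assumes "vec.subspace D" "D \<subseteq> C" "vec.dim D = r" "0 < r" "Supp D = UNIV"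
    and "\<And>D. vec.subspace D \<Longrightarrow> D \<subseteq> C \<Longrightarrow> 0 < vec.dim D \<Longrightarrow> Supp D = UNIV
      \<Longrightarrow> r \<le> vec.dim D"
  shows "covering_dim C = enat r"
proof -
  have "Supp C = UNIV" using Supp_mono[OF assms(2)] assms(5) by blast
  moreover have "(LEAST r. 0 < r \<and>
      (\<exists>D. vec.subspace D \<and> D \<subseteq> C \<and> vec.dim D = r \<and> Supp D = UNIV)) = r"
    by (rule Least_equality) (use assms in blast)+
  ultimately show ?thesis unfolding covering_dim_def by simp
qed

locale dual_hamming_generator =
  fixes C :: "('a::{finite,field} ^ 'n::finite) set" and k :: nat and G :: "nat \<Rightarrow> 'a ^ 'n"
  assumes inj_G: "inj_on G {..<k}"
    and span_G: "vec.span (G ` {..<k}) = C"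
    and column_nonzero: "\<exists>i<k. G i $ j \<noteq> 0"
    and column_unique: "(\<forall>i\<ge>k. v i = 0) \<Longrightarrow> v \<noteq> (\<lambda>_. 0) \<Longrightarrow>
      \<exists>!j. \<exists>c. \<forall>i<k. G i $ j = c * v i"
begin

lemma dual_code_iff: "y \<in> dual_code C \<longleftrightarrow> (\<forall>i<k. dotp (G i) y = 0)"
  using dual_code_span[of y "G ` {..<k}"] unfolding span_G by auto

lemma code_element_as_sum:
  assumes "x \<in> C"
  obtains u where "x = (\<Sum>i<k. u i *s G i)"
proof -
  obtain u where "x = (\<Sum>v\<in>G ` {..<k}. u v *s v)"
    using assms unfolding span_G[symmetric] vec.span_finite[OF finite_imageI[OF finite_lessThan]] by auto
  also have "\<dots> = (\<Sum>i<k. u (G i) *s G i)" by (rule sum.reindex[OF inj_G, unfolded comp_def])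
  finally show thesis by (rule that)
qed

lemma column_proportional:
  assumes "\<forall>i\<ge>k. v i = 0" "v \<noteq> (\<lambda>_. 0)"
  shows "\<exists>j c. c \<noteq> 0 \<and> (\<forall>i<k. G i $ j = c * v i)"
proof -
  obtain j c where jc: "\<forall>i<k. G i $ j = c * v i" using column_unique[OF assms] by blast
  moreover have "c \<noteq> 0" using jc column_nonzero[of j] by auto
  ultimately show ?thesis by blast
qed

lemma dual_code_weight_ge_3:
  assumes y: "y \<in> dual_code C" "y \<noteq> 0"
  shows "3 \<le> wt y"
proof (rule ccontr)
  assume "\<not> 3 \<le> wt y"
  obtain j where yj: "y $ j \<noteq> 0" using y(2) by (metis vec_eq_iff zero_index)
  then have card: "card (supp y - {j}) \<le> Suc 0"
    using \<open>\<not> 3 \<le> wt y\<close> unfolding wt_def supp_def by simp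
  obtain l where supp: "supp y \<subseteq> {j, l}"
  proof (cases "supp y - {j} = {}")
    case True
    then show thesis using that[of j] by auto
  next
    case False
    then obtain l where "l \<in> supp y - {j}" by blast
    then show thesis using that[of l] card card_le_Suc0_iff_eq[of "supp y - {j}"] by auto
  qed
  define c where "c = (if l = j then 0 else - (y $ l / y $ j))"
  have col: "G i $ j = c * G i $ l" if "i < k" for i
  proof -
    have "dotp (G i) y = (\<Sum>m\<in>{j, l}. G i $ m * y $ m)" using supp by (rule dotp_supp_subset)
    moreover have "dotp (G i) y = 0" using y(1) that dual_code_iff by blast
    ultimately show ?thesis using yj by (cases "l = j") (auto simp: c_def field_simps add_eq_0_iff)
  qed
  define v where "v i = (if i < k then G i $ l else 0)" for i
  have "v \<noteq> (\<lambda>_. 0)" using column_nonzero[of l] unfolding v_def by (metis (full_types))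
  then have "\<exists>!j. \<exists>c. \<forall>i<k. G i $ j = c * v i" using column_unique[of v] unfolding v_def by simp
  moreover have "\<forall>i<k. G i $ l = 1 * v i" "\<forall>i<k. G i $ j = c * v i" using col by (simp_all add: v_def)
  ultimately have "j = l" by blast
  then show False using col column_nonzero[of j] by (auto simp: c_def)
qed

lemma dual_code_word_weight_3:
  assumes k: "2 \<le> k"
  obtains y where "y \<in> dual_code C" "y \<noteq> 0" "wt y \<le> 3"
proof -
  define e :: "nat set \<Rightarrow> nat \<Rightarrow> 'a" where "e S i = (if i \<in> S then 1 else 0)" for S i
  have col: "\<exists>j c. c \<noteq> 0 \<and> (\<forall>i<k. G i $ j = c * e S i)" if "S \<subseteq> {0, 1}" "S \<noteq> {}" for S
  proof (rule column_proportional)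
    show "\<forall>i\<ge>k. e S i = 0" using that k unfolding e_def by auto
    show "e S \<noteq> (\<lambda>_. 0)" using that unfolding e_def by (auto simp: fun_eq_iff)
  qed
  obtain j1 c1 where J1: "c1 \<noteq> 0" "\<forall>i<k. G i $ j1 = c1 * e {0} i" using col[of "{0}"] by auto
  obtain j2 c2 where J2: "c2 \<noteq> 0" "\<forall>i<k. G i $ j2 = c2 * e {1} i" using col[of "{1}"] by auto
  obtain j3 c3 where J3: "c3 \<noteq> 0" "\<forall>i<k. G i $ j3 = c3 * e {0, 1} i" using col[of "{0, 1}"] by auto
  have G0: "G 0 $ j1 = c1" "G 0 $ j2 = 0" "G 0 $ j3 = c3"
    and G1: "G 1 $ j1 = 0" "G 1 $ j2 = c2" "G 1 $ j3 = c3"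
    using J1 J2 J3 k unfolding e_def by auto
  then have distinct: "j1 \<noteq> j2" "j1 \<noteq> j3" "j2 \<noteq> j3" using J1(1) J3(1) by auto
  define y :: "'a ^ 'n" where
    "y = (\<chi> m. if m = j1 then c3 / c1 else if m = j2 then c3 / c2 else if m = j3 then -1 else 0)"
  have supp: "supp y \<subseteq> {j1, j2, j3}" unfolding supp_def y_def by auto
  show thesis
  proof
    show "y \<in> dual_code C" unfolding dual_code_iff
    proof (intro allI impI)
      fix i assume "i < k"
      have "dotp (G i) y = (\<Sum>m\<in>{j1, j2, j3}. G i $ m * y $ m)" using supp by (rule dotp_supp_subset)
      also have "\<dots> = c3 * (e {0} i + e {1} i - e {0, 1} i)"
        using distinct J1 J2 J3 \<open>i < k\<close> by (simp add: y_def field_simps)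
      also have "\<dots> = 0" unfolding e_def by simp
      finally show "dotp (G i) y = 0" .
    qed
    have "y $ j3 = -1" using distinct by (simp add: y_def)
    then show "y \<noteq> 0" by auto
    show "wt y \<le> 3" using card_mono[OF _ supp] distinct unfolding wt_def by simp
  qed
qed

lemma min_dist_dual_code:
  assumes "2 \<le> k"
  shows "min_dist (dual_code C) = 3"
proof -
  obtain y where y: "y \<in> dual_code C" "y \<noteq> 0" "wt y \<le> 3" using dual_code_word_weight_3[OF assms] .
  show ?thesis
  proof (rule min_dist_eqI[OF y])
    fix z assume "z \<in> dual_code C" "z \<noteq> 0"
    then show "3 \<le> wt z" by (rule dual_code_weight_ge_3)
  qed
qed

lemma covering_subspace_dim_ge:
  assumes D: "vec.subspace D" "D \<subseteq> C" "Supp D = UNIV"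
  shows "k \<le> vec.dim D"
proof (rule ccontr)
  assume "\<not> k \<le> vec.dim D"
  obtain B where B: "B \<subseteq> D" "vec.independent B" "D \<subseteq> vec.span B" "card B = vec.dim D"
    using vec.basis_exists by blast
  have "\<forall>b\<in>B. \<exists>u. b = (\<Sum>i<k. u i *s G i)" using B(1) D(2) code_element_as_sum by blast
  then obtain u where u: "\<forall>b\<in>B. b = (\<Sum>i<k. u b i *s G i)" by (rule bchoice[THEN exE])
  have "finite B" using B(2) vec.independent_bound_general by blast
  moreover have "card B < card {..<k}" using B(4) \<open>\<not> k \<le> vec.dim D\<close> by simp
  ultimately obtain w where w: "\<forall>i. i \<notin> {..<k} \<longrightarrow> w i = 0" "\<exists>i\<in>{..<k}. w i \<noteq> 0"
    "\<forall>b\<in>B. (\<Sum>i<k. u b i * w i) = 0"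
    by (rule homogeneous_system_nontrivial_solution[OF finite_lessThan])
  have "\<forall>i\<ge>k. w i = 0" "w \<noteq> (\<lambda>_. 0)" using w(1,2) by auto
  then obtain j c where jc: "\<forall>i<k. G i $ j = c * w i" using column_proportional by blast
  have "b $ j = 0" if "b \<in> B" for b
  proof -
    have "b $ j = (\<Sum>i<k. u b i *s G i) $ j" using u that by simp
    also have "\<dots> = (\<Sum>i<k. u b i * G i $ j)" by (simp add: sum_component)
    also have "\<dots> = c * (\<Sum>i<k. u b i * w i)" using jc by (simp add: sum_distrib_left mult.left_commute)
    finally show ?thesis using w(3) that by simp
  qed
  then have "j \<notin> Supp B" unfolding Supp_def supp_def by auto
  moreover have "Supp D \<subseteq> Supp B" using Supp_mono[OF B(3)] Supp_span by blast
  ultimately show False using D(3) by blast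
qed

lemma covering_dim_eq:
  assumes "vec.subspace C" "vec.dim C = k" "0 < k"
  shows "covering_dim C = enat k"
proof -
  have "Supp C = UNIV"
    unfolding span_G[symmetric] Supp_span using column_nonzero by (fastforce simp: Supp_def supp_def)
  then show ?thesis using assms covering_subspace_dim_ge by (intro covering_dim_eqI[of C]) auto
qed

end

lemma dual_hamming_generatorI:
  fixes C :: "('a::{finite,field} ^ 'n::finite) set"
  assumes "dual_hamming C"
  obtains G where "dual_hamming_generator C (vec.dim C) G"
proof -
  let ?k = "vec.dim C"
  from assms obtain G :: "nat \<Rightarrow> 'a ^ 'n" where G: "inj_on G {..<?k}" "vec.span (G ` {..<?k}) = C"
      "\<forall>j. \<exists>i<?k. G i $ j \<noteq> 0"
      "\<forall>v. (\<forall>i\<ge>?k. v i = 0) \<and> v \<noteq> (\<lambda>_. 0) \<longrightarrow> (\<exists>!j. \<exists>c. \<forall>i<?k. G i $ j = c * v i)"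
    unfolding dual_hamming_def Let_def by (elim conjE exE)
  show thesis
  proof (rule that, unfold_locales)
    show "inj_on G {..<?k}" "vec.span (G ` {..<?k}) = C" by (fact G(1), fact G(2))
    show "\<exists>i<?k. G i $ j \<noteq> 0" for j using G(3) by blast
    show "\<exists>!j. \<exists>c. \<forall>i<?k. G i $ j = c * v i" if "\<forall>i\<ge>?k. v i = 0" "v \<noteq> (\<lambda>_. 0)" for v
      using G(4) that by blast
  qed
qed

lemma mds_weight_ge:
  fixes C :: "('a::{finite,field} ^ 'n::finite) set"
  assumes "is_MDS C" "x \<in> C" "x \<noteq> 0"
  shows "CARD('n) - vec.dim C + 1 \<le> wt x"
  using min_dist_le[OF assms(2,3)] assms(1) unfolding is_MDS_def by simp

lemma mds_card_zeros_less:
  fixes C :: "('a::{finite,field} ^ 'n::finite) set"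
  assumes "is_MDS C" "x \<in> C" "x \<noteq> 0"
  shows "card {i. x $ i = 0} < vec.dim C"
proof -
  have "{i. x $ i = 0} = UNIV - supp x" unfolding supp_def by auto
  then have "card {i. x $ i = 0} = CARD('n) - wt x" unfolding wt_def by (simp add: card_Diff_subset)
  moreover have "wt x \<le> CARD('n)" unfolding wt_def by (rule card_mono) auto
  ultimately show ?thesis using mds_weight_ge[OF assms] by linarith
qed

lemma mds_eq_if_eq_on:
  assumes mds: "is_MDS C" and "x \<in> C" "z \<in> C" "card K = vec.dim C" "\<forall>i\<in>K. x $ i = z $ i"
  shows "x = z"
proof (rule ccontr)
  assume "x \<noteq> z"
  moreover have "x - z \<in> C" using mds assms(2,3) unfolding is_MDS_def by (simp add: vec.subspace_diff)
  ultimately have "card {i. (x - z) $ i = 0} < card K"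
    using mds_card_zeros_less[OF mds, of "x - z"] assms(4) by (simp only: right_minus_eq simp_thms)
  moreover have "K \<subseteq> {i. (x - z) $ i = 0}" using assms(5) by auto
  ultimately show False using card_mono[of "{i. (x - z) $ i = 0}" K] by simp
qed

lemma mds_interpolation:
  fixes C :: "('a::{finite,field} ^ 'n::finite) set"
  assumes mds: "is_MDS C" and K: "card K = vec.dim C"
  obtains x where "x \<in> C" and "\<forall>i\<in>K. x $ i = f i"
proof -
  define r where "r x = restrict (\<lambda>i. x $ i) K" for x :: "'a ^ 'n"
  let ?P = "PiE K (\<lambda>_. UNIV :: 'a set)"
  have "inj_on r C"
    by (rule inj_onI, rule mds_eq_if_eq_on[OF mds _ _ K]) (auto simp: r_def, metis restrict_apply')
  then have "card (r ` C) = card ?P"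
    using card_subspace[of C] mds K unfolding is_MDS_def by (simp add: card_image card_PiE)
  then have "r ` C = ?P" by (intro card_subset_eq) (auto simp: r_def)
  moreover have "restrict f K \<in> ?P" by simp
  ultimately obtain x where "x \<in> C" "r x = restrict f K" by (metis imageE)
  then show thesis using that by (metis r_def restrict_apply')
qed

lemma mds_dual_weight_ge:
  fixes C :: "('a::{finite,field} ^ 'n::finite) set"
  assumes mds: "is_MDS C" and y: "y \<in> dual_code C" "y \<noteq> 0"
  shows "vec.dim C + 1 \<le> wt y"
proof (rule ccontr)
  assume "\<not> vec.dim C + 1 \<le> wt y"
  then obtain K where K: "supp y \<subseteq> K" "card K = vec.dim C"
    using exists_subset_between[of "supp y" "vec.dim C" UNIV] dim_subset_UNIV_cart_gen[of C]
    unfolding wt_def by auto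
  obtain a where a: "y $ a \<noteq> 0" using y(2) by (metis vec_eq_iff zero_index)
  then have "a \<in> K" using K(1) unfolding supp_def by auto
  obtain x where x: "x \<in> C" "\<forall>i\<in>K. x $ i = (if i = a then 1 else 0)"
    using mds_interpolation[OF mds K(2), where f = "\<lambda>i. if i = a then 1 else 0"] by blast
  have "dotp x y = (\<Sum>i\<in>K. x $ i * y $ i)" using K(1) by (rule dotp_supp_subset)
  also have "\<dots> = (\<Sum>i\<in>K. if i = a then y $ a else 0)" using x(2) by (intro sum.cong) auto
  also have "\<dots> = y $ a" using \<open>a \<in> K\<close> by simp
  finally show False using x(1) y(1) a unfolding dual_code_def by auto
qed

lemma dual_code_word_weight_le:
  fixes C :: "('a::{finite,field} ^ 'n::finite) set"
  assumes sub: "vec.subspace C" and less: "vec.dim C < CARD('n)"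
  obtains y where "y \<in> dual_code C" "y \<noteq> 0" "wt y \<le> vec.dim C + 1"
proof -
  obtain B where B: "B \<subseteq> C" "vec.independent B" "C \<subseteq> vec.span B" "card B = vec.dim C"
    using vec.basis_exists by blast
  obtain T :: "'n set" where T: "card T = vec.dim C + 1"
    using ex_card[of "vec.dim C + 1" "UNIV :: 'n set"] less by auto
  have "finite B" using B(2) vec.independent_bound_general by blast
  moreover have "card B < card T" using B(4) T by simp
  ultimately obtain w where w: "\<forall>i. i \<notin> T \<longrightarrow> w i = 0" "\<exists>i\<in>T. w i \<noteq> 0"
    "\<forall>b\<in>B. (\<Sum>i\<in>T. b $ i * w i) = 0"
    by (rule homogeneous_system_nontrivial_solution[OF finite])
  define y where "y = (\<chi> i. w i)"
  have supp: "supp y \<subseteq> T" using w(1) unfolding supp_def y_def by auto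
  show thesis
  proof
    have "\<forall>b\<in>B. dotp b y = 0" using w(3) dotp_supp_subset[OF supp] by (simp add: y_def)
    then show "y \<in> dual_code C" using dual_code_span vec.span_subspace[OF B(1,3) sub] by blast
    show "y \<noteq> 0" using w(2) unfolding y_def by (metis vec_lambda_beta zero_index)
    show "wt y \<le> vec.dim C + 1" using card_mono[OF _ supp] T unfolding wt_def by simp
  qed
qed

lemma mds_dim_less:
  fixes C :: "('a::{finite,field} ^ 'n::finite) set"
  assumes mds: "is_MDS C" and no_full: "\<forall>x\<in>C. wt x \<noteq> CARD('n)"
  shows "vec.dim C < CARD('n)"
proof (rule ccontr)
  assume "\<not> vec.dim C < CARD('n)"
  then have "card (UNIV :: 'n set) = vec.dim C" using dim_subset_UNIV_cart_gen[of C] by simp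
  then obtain x where "x \<in> C" "\<forall>i. x $ i = 1"
    using mds_interpolation[OF mds, where K = UNIV and f = "\<lambda>_. 1"] by auto
  moreover from this have "wt x = CARD('n)" unfolding wt_def supp_def by simp
  ultimately show False using no_full by blast
qed

lemma mds_min_dist_dual_code:
  fixes C :: "('a::{finite,field} ^ 'n::finite) set"
  assumes mds: "is_MDS C" and no_full: "\<forall>x\<in>C. wt x \<noteq> CARD('n)"
  shows "min_dist (dual_code C) = vec.dim C + 1"
proof -
  have "vec.subspace C" using mds unfolding is_MDS_def by simp
  then obtain y where y: "y \<in> dual_code C" "y \<noteq> 0" "wt y \<le> vec.dim C + 1"
    using dual_code_word_weight_le mds_dim_less[OF mds no_full] by blast
  show ?thesis
  proof (rule min_dist_eqI[OF y])
    fix z assume "z \<in> dual_code C" "z \<noteq> 0"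
    then show "vec.dim C + 1 \<le> wt z" by (rule mds_dual_weight_ge[OF mds])
  qed
qed

lemma covering_subspace_dim_ge_2:
  fixes C :: "('a::{finite,field} ^ 'n::finite) set"
  assumes no_full: "\<forall>x\<in>C. wt x \<noteq> CARD('n)"
    and D: "vec.subspace D" "D \<subseteq> C" "0 < vec.dim D" "Supp D = UNIV"
  shows "2 \<le> vec.dim D"
proof (rule ccontr)
  assume "\<not> 2 \<le> vec.dim D"
  then have "vec.dim D = 1" using D(3) by simp
  then obtain v where v: "v \<in> D" "Supp D = supp v" using subspace_dim_one_Supp[OF D(1)] by blast
  then have "wt v = CARD('n)" using D(4) unfolding wt_def by simp
  then show False using no_full D(2) v(1) by blast
qed

text \<open>With S a set of k - 1 coordinates and a outside it, the covering pair is the codeword x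
  that is the indicator of a on S \<union> {a} (it vanishes exactly on S) and a codeword z that
  is 1 on S and 0 at a.\<close>
lemma mds_covering_subspace_dim_2:
  fixes C :: "('a::{finite,field} ^ 'n::finite) set"
  assumes mds: "is_MDS C" and k: "2 \<le> vec.dim C" "vec.dim C < CARD('n)"
  obtains D where "vec.subspace D" "D \<subseteq> C" "vec.dim D = 2" "Supp D = UNIV"
proof -
  have sub: "vec.subspace C" using mds unfolding is_MDS_def by simp
  have "vec.dim C - 1 \<le> card (UNIV :: 'n set)" using k by simp
  then obtain S :: "'n set" where S: "card S = vec.dim C - 1" by (metis ex_card)
  then have "S \<noteq> UNIV" using k by auto
  then obtain a where a: "a \<notin> S" by blast
  have K: "card (insert a S) = vec.dim C" using S a k(1) finite_subset by (simp add: card_insert_if)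
  obtain x where x: "x \<in> C" "\<forall>i\<in>insert a S. x $ i = (if i = a then 1 else 0)"
    using mds_interpolation[OF mds K, where f = "\<lambda>i. if i = a then 1 else 0"] by blast
  obtain z where z: "z \<in> C" "\<forall>i\<in>insert a S. z $ i = (if i = a then 0 else 1)"
    using mds_interpolation[OF mds K, where f = "\<lambda>i. if i = a then 0 else 1"] by blast
  have "x \<noteq> 0" using x(2) by (metis insertI1 one_neq_zero zero_index)
  then have "card {i. x $ i = 0} \<le> card S" using mds_card_zeros_less[OF mds x(1)] S by simp
  moreover have "S \<subseteq> {i. x $ i = 0}" using x(2) a by auto
  ultimately have "S = {i. x $ i = 0}" by (intro card_seteq) auto
  then have supp_x: "supp x = - S" unfolding supp_def by auto
  have supp_z: "S \<subseteq> supp z"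
  proof
    fix i assume "i \<in> S"
    then have "z $ i = 1" using z(2) a by (metis insertCI)
    then show "i \<in> supp z" unfolding supp_def by simp
  qed
  obtain s where "s \<in> S" using S k(1) by fastforce
  then have "z \<noteq> 0" using supp_z unfolding supp_def by auto
  have "x \<notin> vec.span {z}"
  proof
    assume "x \<in> vec.span {z}"
    then obtain c where "x = c *s z" unfolding vec.span_singleton by auto
    then show False using x(2) z(2) by (metis insertI1 mult_zero_right one_neq_zero vector_smult_component)
  qed
  then have indep: "vec.independent {x, z}" and "x \<noteq> z"
    using \<open>z \<noteq> 0\<close> vec.span_base[of z "{z}"] by (auto simp: vec.independent_insert)
  show thesis
  proof
    show "vec.subspace (vec.span {x, z})" by simp
    show "vec.span {x, z} \<subseteq> C" using x(1) z(1) sub by (intro vec.span_minimal) auto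
    show "vec.dim (vec.span {x, z}) = 2"
      using vec.dim_span_eq_card_independent[OF indep] \<open>x \<noteq> z\<close> by simp
    show "Supp (vec.span {x, z}) = UNIV" unfolding Supp_span using supp_x supp_z by (auto simp: Supp_def)
  qed
qed

lemma mds_covering_dim:
  fixes C :: "('a::{finite,field} ^ 'n::finite) set"
  assumes mds: "is_MDS C" and no_full: "\<forall>x\<in>C. wt x \<noteq> CARD('n)" and k: "2 \<le> vec.dim C"
  shows "covering_dim C = enat 2"
proof -
  obtain D where "vec.subspace D" "D \<subseteq> C" "vec.dim D = 2" "Supp D = UNIV"
    using mds_covering_subspace_dim_2[OF mds k mds_dim_less[OF mds no_full]] .
  then show ?thesis using covering_subspace_dim_ge_2[OF no_full] by (intro covering_dim_eqI) auto
qed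

theorem mainTheorem3:
  fixes C :: "('a::{finite,field} ^ 'n::finite) set" and k :: nat
  assumes "is_code C" and "vec.dim C = k" and "k \<ge> 2"
  shows "(dual_hamming C \<longrightarrow>
            min_dist (dual_code C) = 3 \<and> covering_dim C = enat k \<and>
            int k = int k - int (min_dist (dual_code C)) + 3)
       \<and> (is_MDS C \<and> (\<forall>x\<in>C. wt x \<noteq> CARD('n)) \<longrightarrow>
            min_dist (dual_code C) = k + 1 \<and> covering_dim C = enat 2 \<and>
            (2::int) = int k - int (min_dist (dual_code C)) + 3)"
proof -
  have part_a: "min_dist (dual_code C) = 3 \<and> covering_dim C = enat k" if dh: "dual_hamming C"
  proof -
    obtain G where "dual_hamming_generator C k G"
      using dual_hamming_generatorI[OF dh] unfolding assms(2) .
    then interpret dual_hamming_generator C k G .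
    show ?thesis using min_dist_dual_code covering_dim_eq assms by (simp add: is_code_def)
  qed
  have part_b: "min_dist (dual_code C) = k + 1 \<and> covering_dim C = enat 2"
    if "is_MDS C" "\<forall>x\<in>C. wt x \<noteq> CARD('n)"
    using mds_min_dist_dual_code[OF that] mds_covering_dim[OF that] assms(2,3) by simp
  show ?thesis using part_a part_b by auto
qed

end
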